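(* Every regular normal extremal that is time-optimal for the problem below begins with an $X$-arc; that is, the control $A$ equals $X$ on some interval $[0,\delta)$, $\delta>0$.
   Context: Fix $\gamma\in(0,\pi/2)$, $s=\sin\gamma$, $c=\cos\gamma$, and $X=\begin{pmatrix}0&s^2&sc\\-s^2&0&0\\-sc&0&0\end{pmatrix}$, $Y=\begin{pmatrix}0&1&0\\-1&0&0\\0&0&0\end{pmatrix}$ on $\mathbb R^3$ with standard basis $e_1,e_2,e_3$ and standard inner product. Let $\Sigma=\{\psi:\langle e_3,\psi\rangle=0\}$, $\psi_0=(0,s,c)^\top$ (the large-block limit of the uniform superposition). Time-optimal problem: over piecewise constant controls $A:[0,T]\to\{X,Y\}$ with finitely many discontinuities (switching times) and trajectories $\dot\psi=A(t)\psi$, $\psi(0)=\psi_0$, minimize $T$ subject to $\psi(T)\in\Sigma$. Maximal intervals on which $A\equiv X$ are $X$-arcs. A normal extremal is such a trajectory with a nonzero absolutely continuous costate $p$ satisfying $\dot p=-A(t)^\top p$ and, for a.e. $t$, $\langle p,A(t)\psi\rangle-1=\max_{B\in\{X,Y\}}(\langle p,B\psi\rangle-1)$. With $\phi_1=\langle p,(X-Y)\psi\rangle$ and $\phi_2=\langle p,[X,Y]\psi\rangle$, a normal extremal is regular (bang–bang) if $\phi_1$ vanishes only at isolated times and at every switching time $\phi_1=0$ and $\phi_2\neq0$. *)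

theory Defs
  imports "HOL-Analysis.Analysis"
begin

definition Xmat :: "real \<Rightarrow> real^3^3" where
  "Xmat \<gamma> = (let s = sin \<gamma>; c = cos \<gamma> in
     vector [vector [0, s^2, s*c], vector [- (s^2), 0, 0], vector [- (s*c), 0, 0]])"

definition Ymat :: "real^3^3" where
  "Ymat = vector [vector [0, 1, 0], vector [-1, 0, 0], vector [0, 0, 0]]"

definition psi0 :: "real \<Rightarrow> real^3" where
  "psi0 \<gamma> = vector [0, sin \<gamma>, cos \<gamma>]"

definition Sigma_set :: "(real^3) set" where
  "Sigma_set = {\<psi>. (axis 3 1 :: real^3) \<bullet> \<psi> = 0}"

text \<open>Piecewise constant control on [0,T] with values in {X,Y} and finitely many
  discontinuities; convention: A is constant on half-open intervals [t_i, t_(i+1)).\<close>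
definition admissible_control :: "real \<Rightarrow> real \<Rightarrow> (real \<Rightarrow> real^3^3) \<Rightarrow> bool" where
  "admissible_control \<gamma> T A \<longleftrightarrow> 0 \<le> T \<and>
     (\<forall>t\<in>{0..T}. A t = Xmat \<gamma> \<or> A t = Ymat) \<and>
     (\<forall>t\<in>{0..<T}. \<exists>\<epsilon>>0. \<forall>u\<in>{t..<t+\<epsilon>}. A u = A t) \<and>
     (\<exists>S. finite S \<and> (\<forall>t\<in>{0<..<T} - S. \<exists>\<epsilon>>0. \<forall>u\<in>{t-\<epsilon><..<t+\<epsilon>}. A u = A t))"

definition switching_time :: "real \<Rightarrow> (real \<Rightarrow> real^3^3) \<Rightarrow> real \<Rightarrow> bool" where
  "switching_time T A t \<longleftrightarrow> t \<in> {0<..<T} \<and>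
     \<not> (\<exists>\<epsilon>>0. \<forall>u\<in>{t-\<epsilon><..<t+\<epsilon>}. A u = A t)"

definition solves_ode :: "real \<Rightarrow> (real \<Rightarrow> real^3^3) \<Rightarrow> (real \<Rightarrow> real^3) \<Rightarrow> bool" where
  "solves_ode T A \<psi> \<longleftrightarrow> continuous_on {0..T} \<psi> \<and>
     (\<exists>S. finite S \<and> (\<forall>t\<in>{0..T} - S.
        (\<psi> has_vector_derivative (A t *v \<psi> t)) (at t within {0..T})))"

definition feasible :: "real \<Rightarrow> real \<Rightarrow> (real \<Rightarrow> real^3^3) \<Rightarrow> (real \<Rightarrow> real^3) \<Rightarrow> bool" where
  "feasible \<gamma> T A \<psi> \<longleftrightarrow> admissible_control \<gamma> T A \<and> solves_ode T A \<psi> \<and>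
     \<psi> 0 = psi0 \<gamma> \<and> \<psi> T \<in> Sigma_set"

definition time_optimal :: "real \<Rightarrow> real \<Rightarrow> (real \<Rightarrow> real^3^3) \<Rightarrow> (real \<Rightarrow> real^3) \<Rightarrow> bool" where
  "time_optimal \<gamma> T A \<psi> \<longleftrightarrow> feasible \<gamma> T A \<psi> \<and>
     (\<forall>T' A' \<psi>'. feasible \<gamma> T' A' \<psi>' \<longrightarrow> T \<le> T')"

definition normal_extremal_costate ::
  "real \<Rightarrow> real \<Rightarrow> (real \<Rightarrow> real^3^3) \<Rightarrow> (real \<Rightarrow> real^3) \<Rightarrow> (real \<Rightarrow> real^3) \<Rightarrow> bool" where
  "normal_extremal_costate \<gamma> T A \<psi> p \<longleftrightarrow>
     feasible \<gamma> T A \<psi> \<and>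
     (\<exists>t\<in>{0..T}. p t \<noteq> 0) \<and>
     solves_ode T (\<lambda>t. - transpose (A t)) p \<and>
     (AE t in lborel. t \<in> {0..T} \<longrightarrow>
        p t \<bullet> (A t *v \<psi> t) - 1 =
          max (p t \<bullet> (Xmat \<gamma> *v \<psi> t) - 1) (p t \<bullet> (Ymat *v \<psi> t) - 1))"

definition phi1 :: "real \<Rightarrow> (real \<Rightarrow> real^3) \<Rightarrow> (real \<Rightarrow> real^3) \<Rightarrow> real \<Rightarrow> real" where
  "phi1 \<gamma> \<psi> p t = p t \<bullet> ((Xmat \<gamma> - Ymat) *v \<psi> t)"

definition phi2 :: "real \<Rightarrow> (real \<Rightarrow> real^3) \<Rightarrow> (real \<Rightarrow> real^3) \<Rightarrow> real \<Rightarrow> real" where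
  "phi2 \<gamma> \<psi> p t = p t \<bullet> ((Xmat \<gamma> ** Ymat - Ymat ** Xmat \<gamma>) *v \<psi> t)"

definition regular_normal_extremal ::
  "real \<Rightarrow> real \<Rightarrow> (real \<Rightarrow> real^3^3) \<Rightarrow> (real \<Rightarrow> real^3) \<Rightarrow> (real \<Rightarrow> real^3) \<Rightarrow> bool" where
  "regular_normal_extremal \<gamma> T A \<psi> p \<longleftrightarrow>
     normal_extremal_costate \<gamma> T A \<psi> p \<and>
     (\<forall>t\<in>{0..T}. phi1 \<gamma> \<psi> p t = 0 \<longrightarrow>
        (\<exists>\<epsilon>>0. \<forall>u\<in>{0..T}. 0 < \<bar>u - t\<bar> \<and> \<bar>u - t\<bar> < \<epsilon> \<longrightarrow> phi1 \<gamma> \<psi> p u \<noteq> 0)) \<and>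
     (\<forall>t. switching_time T A t \<longrightarrow> phi1 \<gamma> \<psi> p t = 0 \<and> phi2 \<gamma> \<psi> p t \<noteq> 0)"

end

theory Submission
  imports Defs
begin

(*
  X rotates the plane of e1 and psi0 at angular speed s = sin gamma and annihilates
  (0, c, -s); Y rotates the (e1, e2)-plane at unit speed and fixes e3. The pure X-arc
  reaches Sigma at time pi / (2 s), which bounds every optimal time T.

  Suppose the control started with a Y-arc of length tau. Both beta = <psi0, psi> and,
  while nu = <(0, c, -s), psi> is positive, psi_3 / c satisfy z' >= - s sqrt (1 - z^2),
  so once strictly above the barrier cos (s t) they stay above it. After the Y-arc,
  beta = s^2 cos tau + c^2 > cos (s tau) by strict concavity of 1 - cos. At the last
  time nu <= 0 we have psi_3 >= c beta, so the barrier passes to psi_3 / c, and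
  psi_3 (T) > c cos (s T) >= 0 contradicts psi (T) in Sigma.
*)

section \<open>One-variable calculus\<close>

lemma DERIV_nonneg_imp_increasing_finite:
  fixes f f' :: "real \<Rightarrow> real"
  assumes "finite S" "a \<le> b" "continuous_on {a..b} f"
    and "\<And>x. x \<in> {a<..<b} - S \<Longrightarrow> (f has_real_derivative f' x) (at x)"
    and "\<And>x. x \<in> {a<..<b} - S \<Longrightarrow> 0 \<le> f' x"
  shows "f a \<le> f b"
proof -
  define g where "g x = (if x \<in> {a<..<b} - S then f' x else 0)" for x
  have "(g has_integral f b - f a) {a..b}"
    by (rule fundamental_theorem_of_calculus_interior_strong[OF assms(1-2) _ assms(3)])
      (simp add: g_def assms(4) flip: has_real_derivative_iff_has_vector_derivative)
  then have "0 \<le> f b - f a"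
    by (rule has_integral_nonneg) (simp add: g_def assms(5))
  then show ?thesis by simp
qed

lemma DERIV_zero_imp_constant_finite:
  fixes f :: "real \<Rightarrow> 'a::banach"
  assumes "finite S" "continuous_on {a..b} f"
    and "\<And>x. x \<in> {a<..<b} - S \<Longrightarrow> (f has_vector_derivative 0) (at x)"
    and "t \<in> {a..b}"
  shows "f t = f a"
proof (rule has_derivative_zero_unique_strong_interval[where k = "insert a (insert b S)"])
  fix x assume "x \<in> {a..b} - insert a (insert b S)"
  then show "(f has_derivative (\<lambda>h. 0)) (at x within {a..b})"
    using assms(3)[of x] by (auto simp: has_vector_derivative_def intro: has_derivative_at_withinI)
qed (use assms in auto)

lemma has_real_derivative_vec_nth:
  assumes "(f has_vector_derivative f') F"
  shows "((\<lambda>x. f x $ i) has_real_derivative f' $ i) F"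
  using bounded_linear.has_vector_derivative[OF bounded_linear_vec_nth assms]
  by (simp add: has_real_derivative_iff_has_vector_derivative)

lemma neg_mult_sqrt_le:
  fixes k x y :: real
  assumes "0 \<le> k" "x\<^sup>2 \<le> y"
  shows "- k * sqrt y \<le> - k * x" "- k * sqrt y \<le> 0"
proof -
  have "x \<le> sqrt y" "0 \<le> sqrt y"
    using assms(2) real_le_rsqrt[of x y] order_trans[OF zero_le_power2 assms(2)] by auto
  then show "- k * sqrt y \<le> - k * x" "- k * sqrt y \<le> 0"
    using assms(1) mult_left_mono by auto
qed

lemma cos_less_if_deriv_ge_neg_sqrt:
  fixes z z' :: "real \<Rightarrow> real"
  assumes "0 \<le> a" "a \<le> b" "0 \<le> k" "k * b \<le> pi / 2"
    and start: "cos (k * a) < z a" and cont: "continuous_on {a..b} z" and "finite S"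
    and deriv: "\<And>u. u \<in> {a<..<b} - S \<Longrightarrow> (z has_real_derivative z' u) (at u)"
    and bound: "\<And>u. u \<in> {a<..<b} - S \<Longrightarrow> 0 < z u \<Longrightarrow> - k * sqrt (1 - (z u)\<^sup>2) \<le> z' u"
    and t: "t \<in> {a..b}"
  shows "cos (k * t) < z t"
proof (rule ccontr)
  assume "\<not> cos (k * t) < z t"
  define g where "g u = z u - cos (k * u)" for u
  have cont_g: "continuous_on {a..b} g"
    unfolding g_def by (intro continuous_intros cont)
  \<comment> \<open>Before the first contact time \<open>t1\<close> with the barrier, \<open>z u > cos (k u) \<ge> 0\<close>,
    so the derivative bound applies and \<open>g\<close> cannot decrease.\<close>
  define K where "K = {a..t} \<inter> g -` {..0}"
  have "continuous_on {a..t} g"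
    by (rule continuous_on_subset[OF cont_g]) (use t in auto)
  then have "t \<in> K" "closed K" "bdd_below K"
    using \<open>\<not> cos (k * t) < z t\<close> t unfolding K_def
    by (auto simp: g_def intro!: continuous_closed_preimage)
  then have "Inf K \<in> K"
    using closed_contains_Inf by blast
  define t1 where "t1 = Inf K"
  have t1: "a \<le> t1" "t1 \<le> t" "g t1 \<le> 0"
    using \<open>Inf K \<in> K\<close> unfolding t1_def K_def by auto
  have g_pos: "0 < g u" if "a \<le> u" "u < t1" for u
    using cInf_lower[OF _ \<open>bdd_below K\<close>, of u] that t1 unfolding t1_def K_def by force
  have "g a \<le> g t1"
  proof (rule DERIV_nonneg_imp_increasing_finite[OF \<open>finite S\<close> \<open>a \<le> t1\<close>])
    show "continuous_on {a..t1} g"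
      by (rule continuous_on_subset[OF cont_g]) (use t1 t in auto)
  next
    fix u assume u: "u \<in> {a<..<t1} - S"
    then have u_ab: "u \<in> {a<..<b} - S"
      using t1 t by auto
    show "(g has_real_derivative z' u + k * sin (k * u)) (at u)"
      unfolding g_def by (rule derivative_eq_intros deriv[OF u_ab] refl | simp)+
    have angle: "0 \<le> k * u" "k * u \<le> pi / 2"
      using u t t1 assms(1,3,4) mult_left_mono[of u b k] by auto
    have "cos (k * u) < z u"
      using g_pos[of u] u unfolding g_def by auto
    moreover have "0 \<le> cos (k * u)" "0 \<le> sin (k * u)"
      using angle by (auto intro!: cos_ge_zero sin_ge_zero)
    ultimately have "1 - (z u)\<^sup>2 \<le> (sin (k * u))\<^sup>2"
      using power_strict_mono[of "cos (k * u)" "z u" 2] by (simp add: sin_squared_eq)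
    then have "sqrt (1 - (z u)\<^sup>2) \<le> sin (k * u)"
      using \<open>0 \<le> sin (k * u)\<close> real_sqrt_le_mono by fastforce
    then show "0 \<le> z' u + k * sin (k * u)"
      using bound[OF u_ab] \<open>cos (k * u) < z u\<close> \<open>0 \<le> cos (k * u)\<close> \<open>0 \<le> k\<close>
        mult_left_mono[of "sqrt (1 - (z u)\<^sup>2)" "sin (k * u)" k] by auto
  qed
  then show False
    using start t1(3) unfolding g_def by simp
qed

lemma sin_mult_gt:
  fixes k y :: real
  assumes "0 < k" "k < 1" "0 < y" "y \<le> pi"
  shows "k * sin y < sin (k * y)"
proof -
  define G where "G u = sin (k * u) - k * sin u" for u
  have "G 0 < G y"
  proof (rule DERIV_pos_imp_increasing_open[OF \<open>0 < y\<close>])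
    fix u assume u: "0 < u" "u < y"
    have "cos u < cos (k * u)"
      using u assms by (intro cos_monotone_0_pi) auto
    moreover have "DERIV G u :> k * (cos (k * u) - cos u)"
      unfolding G_def by (rule derivative_eq_intros refl)+ (simp add: algebra_simps)
    ultimately show "\<exists>d. DERIV G u :> d \<and> 0 < d"
      using assms by auto
  qed (simp add: G_def continuous_intros)
  then show ?thesis
    by (simp add: G_def)
qed

lemma one_minus_cos_mult_gt:
  fixes k x :: real
  assumes "0 < k" "k < 1" "0 < x" "x \<le> pi"
  shows "k\<^sup>2 * (1 - cos x) < 1 - cos (k * x)"
proof -
  define F where "F u = 1 - cos (k * u) - k\<^sup>2 * (1 - cos u)" for u
  have "F 0 < F x"
  proof (rule DERIV_pos_imp_increasing_open[OF \<open>0 < x\<close>])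
    fix u assume u: "0 < u" "u < x"
    have "k * sin u < sin (k * u)"
      using sin_mult_gt[of k u] u assms by auto
    moreover have "DERIV F u :> k * (sin (k * u) - k * sin u)"
      unfolding F_def by (rule derivative_eq_intros refl)+ (simp add: power2_eq_square algebra_simps)
    ultimately show "\<exists>d. DERIV F u :> d \<and> 0 < d"
      using assms by auto
  qed (simp add: F_def continuous_intros)
  then show ?thesis
    by (simp add: F_def)
qed

section \<open>Skew-symmetric linear systems\<close>

lemma inner_skew_matrix_vector:
  fixes M :: "real^'n^'n"
  assumes "transpose M = - M"
  shows "v \<bullet> (M *v v) = 0"
proof -
  have "v \<bullet> (M *v v) = (transpose M *v v) \<bullet> v"
    by (simp add: dot_lmul_matrix[symmetric] inner_commute)
  also have "\<dots> = - (v \<bullet> (M *v v))"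
  proof -
    have "(- M) *v v = - (M *v v)"
      by (simp add: vec_eq_iff matrix_vector_mult_def sum_negf)
    then show ?thesis by (simp add: assms inner_commute)
  qed
  finally show ?thesis by simp
qed

lemma skew_linear_ode_norm_constant:
  fixes \<phi> :: "real \<Rightarrow> real^'n" and M :: "real \<Rightarrow> real^'n^'n"
  assumes "finite S" "continuous_on {a..b} \<phi>"
    and "\<And>t. t \<in> {a<..<b} - S \<Longrightarrow> (\<phi> has_vector_derivative M t *v \<phi> t) (at t)"
    and "\<And>t. t \<in> {a<..<b} - S \<Longrightarrow> transpose (M t) = - M t"
    and "t \<in> {a..b}"
  shows "norm (\<phi> t) = norm (\<phi> a)"
proof -
  have "\<phi> t \<bullet> \<phi> t = \<phi> a \<bullet> \<phi> a"
  proof (rule DERIV_zero_imp_constant_finite[OF assms(1) _ _ assms(5)])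
    show "continuous_on {a..b} (\<lambda>t. \<phi> t \<bullet> \<phi> t)"
      using assms(2) by (intro continuous_intros)
  next
    fix x assume x: "x \<in> {a<..<b} - S"
    have "((\<lambda>t. \<phi> t \<bullet> \<phi> t) has_vector_derivative
        \<phi> x \<bullet> (M x *v \<phi> x) + (M x *v \<phi> x) \<bullet> \<phi> x) (at x)"
      by (rule bounded_bilinear.has_vector_derivative[OF bounded_bilinear_inner assms(3)[OF x] assms(3)[OF x]])
    then show "((\<lambda>t. \<phi> t \<bullet> \<phi> t) has_vector_derivative 0) (at x)"
      by (simp add: inner_commute inner_skew_matrix_vector[OF assms(4)[OF x]])
  qed
  then show ?thesis
    by (simp add: norm_eq_sqrt_inner)
qed

lemma rotation_has_vector_derivative:
  fixes M :: "real^'n^'n" and u w r :: "real^'n"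
  assumes "M *v u = k *\<^sub>R w" "M *v w = - (k *\<^sub>R u)" "M *v r = 0"
  shows "((\<lambda>t. cos (k * t) *\<^sub>R u + sin (k * t) *\<^sub>R w + r) has_vector_derivative
           M *v (cos (k * t) *\<^sub>R u + sin (k * t) *\<^sub>R w + r)) (at t)"
proof -
  have "((\<lambda>t. cos (k * t) *\<^sub>R u + sin (k * t) *\<^sub>R w + r) has_vector_derivative
           (- sin (k * t) * k) *\<^sub>R u + (cos (k * t) * k) *\<^sub>R w) (at t)"
    by (rule derivative_eq_intros refl | simp)+
  moreover have "M *v (cos (k * t) *\<^sub>R u + sin (k * t) *\<^sub>R w + r) =
      (- sin (k * t) * k) *\<^sub>R u + (cos (k * t) * k) *\<^sub>R w"
    by (simp add: matrix_vector_right_distrib matrix_vector_mult_scaleR assms algebra_simps)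
  ultimately show ?thesis by simp
qed

section \<open>The controls X and Y\<close>

lemma Xmat_mult_vec_nth:
  "(Xmat g *v v) $ 1 = (sin g)\<^sup>2 * v $ 2 + sin g * cos g * v $ 3"
  "(Xmat g *v v) $ 2 = - ((sin g)\<^sup>2 * v $ 1)"
  "(Xmat g *v v) $ 3 = - (sin g * cos g * v $ 1)"
  by (simp_all add: Xmat_def Let_def matrix_vector_mult_def sum_3)

lemma Ymat_mult_vec_nth:
  "(Ymat *v v) $ 1 = v $ 2" "(Ymat *v v) $ 2 = - v $ 1" "(Ymat *v v) $ 3 = 0"
  by (simp_all add: Ymat_def matrix_vector_mult_def sum_3)

lemma transpose_Xmat: "transpose (Xmat g) = - Xmat g"
  by (simp add: Xmat_def Let_def transpose_def vec_eq_iff forall_3)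

lemma transpose_Ymat: "transpose Ymat = - Ymat"
  by (simp add: Ymat_def transpose_def vec_eq_iff forall_3)

lemma Xmat_mult_psi0: "Xmat g *v psi0 g = sin g *\<^sub>R axis 1 1"
proof -
  have "(sin g)\<^sup>2 * sin g + sin g * cos g * cos g = sin g"
    using sin_cos_squared_add[of g] by algebra
  then show ?thesis
    by (simp add: vec_eq_iff forall_3 Xmat_mult_vec_nth psi0_def axis_def)
qed

lemma Xmat_mult_axis_1: "Xmat g *v axis 1 1 = - (sin g *\<^sub>R psi0 g)"
  by (simp add: vec_eq_iff forall_3 Xmat_mult_vec_nth psi0_def axis_def power2_eq_square)

lemma norm_psi0: "norm (psi0 g) = 1"
  by (simp add: psi0_def norm_eq_sqrt_inner inner_vec_def sum_3 flip: power2_eq_square)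

lemma Sigma_set_iff: "v \<in> Sigma_set \<longleftrightarrow> v $ 3 = 0"
  by (simp add: Sigma_set_def inner_axis')

lemma pure_X_feasible:
  assumes "0 \<le> T" "sin g * T = pi / 2"
  shows "feasible g T (\<lambda>_. Xmat g) (\<lambda>t. cos (sin g * t) *\<^sub>R psi0 g + sin (sin g * t) *\<^sub>R axis 1 1)"
    (is "feasible g T _ ?\<psi>")
proof -
  have deriv: "(?\<psi> has_vector_derivative Xmat g *v ?\<psi> t) (at t)" for t
    using rotation_has_vector_derivative[of "Xmat g" "psi0 g" "sin g" "axis 1 1" 0 t]
    by (simp add: Xmat_mult_psi0 Xmat_mult_axis_1)
  have "?\<psi> T \<in> Sigma_set"
    by (simp add: Sigma_set_iff psi0_def axis_def assms(2))
  moreover have "solves_ode T (\<lambda>_. Xmat g) ?\<psi>"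
  proof -
    have "continuous_on {0..T} ?\<psi>"
      by (intro continuous_intros)
    then show ?thesis
      unfolding solves_ode_def using deriv has_vector_derivative_at_within by blast
  qed
  moreover have "admissible_control g T (\<lambda>_. Xmat g)"
    unfolding admissible_control_def using assms(1) zero_less_one finite.emptyI by blast
  ultimately show ?thesis
    unfolding feasible_def by simp
qed

section \<open>Trajectories of the two-control system\<close>

locale XY_trajectory =
  fixes \<gamma> T :: real and A :: "real \<Rightarrow> real^3^3" and \<psi> :: "real \<Rightarrow> real^3"
  assumes gamma_bounds: "0 < \<gamma>" "\<gamma> < pi / 2"
    and control_values: "\<And>t. t \<in> {0..T} \<Longrightarrow> A t = Xmat \<gamma> \<or> A t = Ymat"
    and ode: "solves_ode T A \<psi>"
    and initial: "\<psi> 0 = psi0 \<gamma>"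
begin

abbreviation s where "s \<equiv> sin \<gamma>"
abbreviation c where "c \<equiv> cos \<gamma>"

lemma sin_gamma_pos: "0 < s"
  using gamma_bounds by (intro sin_gt_zero) auto

lemma cos_gamma_pos: "0 < c"
  using gamma_bounds by (intro cos_gt_zero) auto

lemma sin_gamma_less_1: "s < 1"
proof -
  have "0 < c\<^sup>2"
    using cos_gamma_pos by simp
  then have "s\<^sup>2 < 1"
    using sin_cos_squared_add[of \<gamma>] by linarith
  then show ?thesis
    using abs_square_less_1[of s] by (simp add: abs_less_iff)
qed

lemma psi_continuous: "continuous_on {0..T} \<psi>"
  using ode unfolding solves_ode_def by blast

lemma psi_derivativeE:
  obtains S where "finite S"
    "\<And>t. t \<in> {0<..<T} - S \<Longrightarrow> (\<psi> has_vector_derivative A t *v \<psi> t) (at t)"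
proof -
  obtain S where "finite S" and deriv:
    "\<And>t. t \<in> {0..T} - S \<Longrightarrow> (\<psi> has_vector_derivative A t *v \<psi> t) (at t within {0..T})"
    using ode unfolding solves_ode_def by blast
  moreover have "(\<psi> has_vector_derivative A t *v \<psi> t) (at t)" if "t \<in> {0<..<T} - S" for t
    using deriv[of t] that at_within_Icc_at[of 0 t T] by auto
  ultimately show ?thesis
    using that by blast
qed

lemma norm_psi: "t \<in> {0..T} \<Longrightarrow> norm (\<psi> t) = 1"
proof -
  assume t: "t \<in> {0..T}"
  obtain S where "finite S"
    and deriv: "\<And>t. t \<in> {0<..<T} - S \<Longrightarrow> (\<psi> has_vector_derivative A t *v \<psi> t) (at t)"
    using psi_derivativeE by blast
  have "norm (\<psi> t) = norm (\<psi> 0)"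
  proof (rule skew_linear_ode_norm_constant[OF \<open>finite S\<close> psi_continuous deriv _ t])
    fix u assume "u \<in> {0<..<T} - S"
    then show "transpose (A u) = - A u"
      using control_values[of u] transpose_Xmat transpose_Ymat by auto
  qed
  then show ?thesis
    by (simp add: initial norm_psi0)
qed

lemma psi_nth_sum_squares: "t \<in> {0..T} \<Longrightarrow> (\<psi> t $ 1)\<^sup>2 + (\<psi> t $ 2)\<^sup>2 + (\<psi> t $ 3)\<^sup>2 = 1"
  using norm_psi[of t] power2_norm_eq_inner[of "\<psi> t"]
  by (simp add: inner_vec_def sum_3 power2_eq_square)

lemma psi_on_Y_arc:
  assumes "\<tau> \<le> T" "\<And>t. t \<in> {0..\<tau>} \<Longrightarrow> A t = Ymat" "t \<in> {0..\<tau>}"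
  shows "\<psi> t = vector [s * sin t, s * cos t, c]"
proof -
  define \<phi> where "\<phi> t = (cos t *\<^sub>R vector [0, s, 0] + sin t *\<^sub>R vector [s, 0, 0]
    + vector [0, 0, c] :: real^3)" for t :: real
  have "Ymat *v vector [0, s, 0] = 1 *\<^sub>R vector [s, 0, 0]"
    "Ymat *v vector [s, 0, 0] = - (1 *\<^sub>R vector [0, s, 0])" "Ymat *v vector [0, 0, c] = 0"
    by (simp_all add: vec_eq_iff forall_3 Ymat_mult_vec_nth)
  from rotation_has_vector_derivative[OF this]
  have \<phi>_deriv: "(\<phi> has_vector_derivative Ymat *v \<phi> t) (at t)" for t
    unfolding \<phi>_def by simp
  obtain S where "finite S"
    and \<psi>_deriv: "\<And>t. t \<in> {0<..<T} - S \<Longrightarrow> (\<psi> has_vector_derivative A t *v \<psi> t) (at t)"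
    using psi_derivativeE by blast
  have "norm (\<psi> t - \<phi> t) = norm (\<psi> 0 - \<phi> 0)"
  proof (rule skew_linear_ode_norm_constant[where M = "\<lambda>_. Ymat", OF \<open>finite S\<close>])
    show "continuous_on {0..\<tau>} (\<lambda>t. \<psi> t - \<phi> t)"
      using continuous_on_subset[OF psi_continuous, of "{0..\<tau>}"] assms(1)
      unfolding \<phi>_def by (intro continuous_intros) auto
  next
    fix u assume u: "u \<in> {0<..<\<tau>} - S"
    then have "(\<psi> has_vector_derivative Ymat *v \<psi> u) (at u)"
      using \<psi>_deriv[of u] assms(1) assms(2)[of u] by auto
    then show "((\<lambda>t. \<psi> t - \<phi> t) has_vector_derivative Ymat *v (\<psi> u - \<phi> u)) (at u)"
      using has_vector_derivative_diff[OF _ \<phi>_deriv] by (simp add: matrix_vector_mult_diff_distrib)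
  qed (use transpose_Ymat assms(3) in auto)
  moreover have "\<psi> 0 = \<phi> 0"
    by (simp add: initial psi0_def \<phi>_def vec_eq_iff forall_3)
  ultimately have "\<psi> t = \<phi> t"
    by simp
  then show ?thesis
    by (simp add: \<phi>_def vec_eq_iff forall_3)
qed

definition beta :: "real \<Rightarrow> real" where
  "beta t = s * \<psi> t $ 2 + c * \<psi> t $ 3"

definition nu :: "real \<Rightarrow> real" where
  "nu t = c * \<psi> t $ 2 - s * \<psi> t $ 3"

lemma beta_sq_plus_nu_sq: "(beta t)\<^sup>2 + (nu t)\<^sup>2 = (\<psi> t $ 2)\<^sup>2 + (\<psi> t $ 3)\<^sup>2"
proof -
  have "(beta t)\<^sup>2 + (nu t)\<^sup>2 = (s\<^sup>2 + c\<^sup>2) * ((\<psi> t $ 2)\<^sup>2 + (\<psi> t $ 3)\<^sup>2)"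
    unfolding beta_def nu_def by algebra
  then show ?thesis
    by simp
qed

lemma psi_nth_3_eq: "\<psi> t $ 3 = c * beta t - s * nu t"
proof -
  have "c * beta t - s * nu t = (s\<^sup>2 + c\<^sup>2) * \<psi> t $ 3"
    unfolding beta_def nu_def by algebra
  then show ?thesis
    by simp
qed

lemma continuous_on_psi_nth: "{a..b} \<subseteq> {0..T} \<Longrightarrow> continuous_on {a..b} (\<lambda>t. \<psi> t $ i)"
  by (intro continuous_intros continuous_on_subset[OF psi_continuous])

lemma beta_has_real_derivative:
  assumes "t \<in> {0..T}" "(\<psi> has_vector_derivative A t *v \<psi> t) (at t)"
  shows "(beta has_real_derivative - s * \<psi> t $ 1) (at t)"
proof -
  have "(beta has_real_derivative s * (A t *v \<psi> t) $ 2 + c * (A t *v \<psi> t) $ 3) (at t)"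
    unfolding beta_def[abs_def]
    by (intro DERIV_add DERIV_cmult has_real_derivative_vec_nth assms(2))
  moreover have "s * (A t *v \<psi> t) $ 2 + c * (A t *v \<psi> t) $ 3 = - s * \<psi> t $ 1"
  proof -
    have "- (s * (s\<^sup>2 * \<psi> t $ 1)) - c * (s * c * \<psi> t $ 1) = - (s\<^sup>2 + c\<^sup>2) * s * \<psi> t $ 1"
      by algebra
    then show ?thesis
      using control_values[OF assms(1)] by (auto simp: Xmat_mult_vec_nth Ymat_mult_vec_nth)
  qed
  ultimately show ?thesis
    by simp
qed

lemma beta_above_cos:
  assumes "0 \<le> a" "a \<le> b" "b \<le> T" "s * b \<le> pi / 2" "cos (s * a) < beta a" "t \<in> {a..b}"
  shows "cos (s * t) < beta t"
proof -
  obtain S where "finite S"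
    and deriv: "\<And>t. t \<in> {0<..<T} - S \<Longrightarrow> (\<psi> has_vector_derivative A t *v \<psi> t) (at t)"
    using psi_derivativeE by blast
  show ?thesis
  proof (rule cos_less_if_deriv_ge_neg_sqrt[where k = s and S = S and z = beta
        and z' = "\<lambda>u. - s * \<psi> u $ 1", OF assms(1,2) _ assms(4,5) _ \<open>finite S\<close> _ _ assms(6)])
    show "0 \<le> s"
      using sin_gamma_pos by simp
    show "continuous_on {a..b} beta"
      unfolding beta_def[abs_def] using assms(1,3)
      by (intro continuous_intros continuous_on_psi_nth) auto
  next
    fix u assume "u \<in> {a<..<b} - S"
    then have u: "u \<in> {0<..<T} - S"
      using assms(1,3) by auto
    then show "(beta has_real_derivative - s * \<psi> u $ 1) (at u)"
      using beta_has_real_derivative deriv by auto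
    have "(\<psi> u $ 1)\<^sup>2 + (\<psi> u $ 2)\<^sup>2 + (\<psi> u $ 3)\<^sup>2 = 1"
      using psi_nth_sum_squares u by auto
    then have "(\<psi> u $ 1)\<^sup>2 \<le> 1 - (beta u)\<^sup>2"
      using beta_sq_plus_nu_sq[of u] zero_le_power2[of "nu u"] by linarith
    then show "- s * sqrt (1 - (beta u)\<^sup>2) \<le> - s * \<psi> u $ 1"
      using neg_mult_sqrt_le(1) sin_gamma_pos by auto
  qed
qed

lemma control_mult_nth_3:
  assumes "t \<in> {0..T}"
  obtains "(A t *v v) $ 3 = - (s * c * v $ 1)" | "(A t *v v) $ 3 = 0"
  using control_values[OF assms] by (auto simp: Xmat_mult_vec_nth Ymat_mult_vec_nth)

lemma psi_nth_3_above_cos: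
  assumes "0 \<le> a" "a \<le> b" "b \<le> T" "s * b \<le> pi / 2" "cos (s * a) < \<psi> a $ 3 / c"
    and nu_pos: "\<And>u. u \<in> {a<..<b} \<Longrightarrow> 0 < nu u"
    and "t \<in> {a..b}"
  shows "cos (s * t) < \<psi> t $ 3 / c"
proof -
  obtain S where "finite S"
    and deriv: "\<And>t. t \<in> {0<..<T} - S \<Longrightarrow> (\<psi> has_vector_derivative A t *v \<psi> t) (at t)"
    using psi_derivativeE by blast
  show ?thesis
  proof (rule cos_less_if_deriv_ge_neg_sqrt[where k = s and S = S and z = "\<lambda>t. \<psi> t $ 3 / c"
        and z' = "\<lambda>u. (A u *v \<psi> u) $ 3 / c", OF assms(1,2) _ assms(4,5) _ \<open>finite S\<close> _ _ assms(7)])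
    show "0 \<le> s"
      using sin_gamma_pos by simp
    have "continuous_on {a..b} (\<lambda>t. \<psi> t $ 3)"
      using assms(1,3) by (intro continuous_on_psi_nth) auto
    then show "continuous_on {a..b} (\<lambda>t. \<psi> t $ 3 / c)"
      by (rule continuous_on_divide[OF _ continuous_on_const]) (use cos_gamma_pos in auto)
  next
    fix u assume "u \<in> {a<..<b} - S"
    then have u: "u \<in> {0<..<T} - S" "u \<in> {a<..<b}"
      using assms(1,3) by auto
    then show "((\<lambda>t. \<psi> t $ 3 / c) has_real_derivative (A u *v \<psi> u) $ 3 / c) (at u)"
      using deriv by (intro DERIV_cdivide has_real_derivative_vec_nth) auto
    assume "0 < \<psi> u $ 3 / c"
    then have "0 < \<psi> u $ 3"
      using cos_gamma_pos by (simp add: zero_less_divide_iff)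
    then have "(s * \<psi> u $ 3)\<^sup>2 \<le> (c * \<psi> u $ 2)\<^sup>2"
      using nu_pos[OF u(2)] sin_gamma_pos unfolding nu_def by (intro power_mono) auto
    moreover have "(\<psi> u $ 3)\<^sup>2 = s\<^sup>2 * (\<psi> u $ 3)\<^sup>2 + c\<^sup>2 * (\<psi> u $ 3)\<^sup>2"
      by (simp flip: distrib_right)
    ultimately have "(\<psi> u $ 3)\<^sup>2 \<le> c\<^sup>2 * ((\<psi> u $ 2)\<^sup>2 + (\<psi> u $ 3)\<^sup>2)"
      by (simp add: power_mult_distrib distrib_left)
    then have "(\<psi> u $ 3 / c)\<^sup>2 \<le> (\<psi> u $ 2)\<^sup>2 + (\<psi> u $ 3)\<^sup>2"
      using cos_gamma_pos by (simp add: power_divide pos_divide_le_eq mult.commute)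
    moreover have "(\<psi> u $ 1)\<^sup>2 + (\<psi> u $ 2)\<^sup>2 + (\<psi> u $ 3)\<^sup>2 = 1"
      using psi_nth_sum_squares u by auto
    ultimately have bound: "(\<psi> u $ 1)\<^sup>2 \<le> 1 - (\<psi> u $ 3 / c)\<^sup>2"
      by linarith
    show "- s * sqrt (1 - (\<psi> u $ 3 / c)\<^sup>2) \<le> (A u *v \<psi> u) $ 3 / c"
    proof (rule control_mult_nth_3[of u "\<psi> u"])
      assume "(A u *v \<psi> u) $ 3 = - (s * c * \<psi> u $ 1)"
      then show ?thesis
        using neg_mult_sqrt_le(1)[OF _ bound] sin_gamma_pos cos_gamma_pos by simp
    next
      assume "(A u *v \<psi> u) $ 3 = 0"
      then show ?thesis
        using neg_mult_sqrt_le(2)[OF _ bound] sin_gamma_pos by simp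
    qed (use u in auto)
  qed
qed

lemma Y_arc_start_arrives_late:
  assumes "0 < \<tau>" "\<tau> < T" "\<tau> \<le> pi" "\<And>t. t \<in> {0..\<tau>} \<Longrightarrow> A t = Ymat"
    and "\<psi> T \<in> Sigma_set"
  shows "pi / 2 < s * T"
proof (rule ccontr)
  assume "\<not> pi / 2 < s * T"
  then have sT: "s * T \<le> pi / 2"
    by simp
  have \<psi>_\<tau>: "\<psi> \<tau> = vector [s * sin \<tau>, s * cos \<tau>, c]"
    using psi_on_Y_arc[of \<tau> \<tau>] assms(1,2,4) by auto
  have "cos (s * \<tau>) < beta \<tau>"
  proof -
    have "beta \<tau> = 1 - s\<^sup>2 * (1 - cos \<tau>)"
      using \<psi>_\<tau> sin_cos_squared_add[of \<gamma>] by (simp add: beta_def power2_eq_square algebra_simps)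
    then show ?thesis
      using one_minus_cos_mult_gt[OF sin_gamma_pos sin_gamma_less_1 assms(1,3)] by simp
  qed
  have "nu \<tau> \<le> 0"
  proof -
    have "nu \<tau> = s * c * (cos \<tau> - 1)"
      using \<psi>_\<tau> by (simp add: nu_def algebra_simps)
    then show ?thesis
      using sin_gamma_pos cos_gamma_pos by (simp add: mult_nonneg_nonpos)
  qed
  \<comment> \<open>At the last time \<open>t\<^sub>s\<close> with \<open>nu \<le> 0\<close>, the identity \<open>\<psi>\<^sub>3 = c beta - s nu\<close>
    hands the barrier over from \<open>beta\<close> to \<open>\<psi>\<^sub>3 / c\<close>.\<close>
  define N where "N = {\<tau>..T} \<inter> nu -` {..0}"
  have "continuous_on {\<tau>..T} nu"
    unfolding nu_def[abs_def] using assms(1) by (intro continuous_intros continuous_on_psi_nth) auto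
  then have "closed N" "bdd_above N" "\<tau> \<in> N"
    using \<open>nu \<tau> \<le> 0\<close> assms(2) unfolding N_def
    by (auto intro!: continuous_closed_preimage)
  define t\<^sub>s where "t\<^sub>s = Sup N"
  have "t\<^sub>s \<in> N"
    unfolding t\<^sub>s_def using closed_contains_Sup \<open>closed N\<close> \<open>bdd_above N\<close> \<open>\<tau> \<in> N\<close> by blast
  then have t\<^sub>s: "\<tau> \<le> t\<^sub>s" "t\<^sub>s \<le> T" "nu t\<^sub>s \<le> 0"
    unfolding N_def by auto
  have nu_pos: "0 < nu u" if "u \<in> {t\<^sub>s<..<T}" for u
  proof (rule ccontr)
    assume "\<not> 0 < nu u"
    then have "u \<in> N"
      using that t\<^sub>s(1) unfolding N_def by auto
    then show False
      using cSup_upper[OF _ \<open>bdd_above N\<close>] that unfolding t\<^sub>s_def by force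
  qed
  have "s * t\<^sub>s \<le> s * T"
    using t\<^sub>s(2) sin_gamma_pos by (simp add: mult_left_mono)
  then have s_t\<^sub>s: "s * t\<^sub>s \<le> pi / 2"
    using sT by linarith
  have "cos (s * t\<^sub>s) < beta t\<^sub>s"
    using beta_above_cos[of \<tau> t\<^sub>s] t\<^sub>s s_t\<^sub>s \<open>cos (s * \<tau>) < beta \<tau>\<close> assms(1) by auto
  also have "beta t\<^sub>s \<le> \<psi> t\<^sub>s $ 3 / c"
    using psi_nth_3_eq[of t\<^sub>s] t\<^sub>s(3) sin_gamma_pos cos_gamma_pos
    by (simp add: pos_le_divide_eq mult_nonneg_nonpos mult.commute)
  finally have "cos (s * T) < \<psi> T $ 3 / c"
    using psi_nth_3_above_cos[of t\<^sub>s T] t\<^sub>s nu_pos sT assms(1) by auto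
  moreover have "0 \<le> cos (s * T)"
  proof -
    have "0 \<le> s * T"
      using sin_gamma_pos assms(1,2) by simp
    then show ?thesis
      using sT by (intro cos_ge_zero) linarith+
  qed
  ultimately show False
    using assms(5) by (simp add: Sigma_set_iff)
qed

end

theorem lemmaA2:
  fixes \<gamma> T :: real and A :: "real \<Rightarrow> real^3^3" and \<psi> p :: "real \<Rightarrow> real^3"
  assumes "0 < \<gamma>" and "\<gamma> < pi / 2"
    and "regular_normal_extremal \<gamma> T A \<psi> p"
    and "time_optimal \<gamma> T A \<psi>"
  shows "\<exists>\<delta>>0. \<delta> \<le> T \<and> (\<forall>t\<in>{0..<\<delta>}. A t = Xmat \<gamma>)"
proof -
  \<comment> \<open>Time-optimality alone forces the initial X-arc.\<close>
  have feasible: "feasible \<gamma> T A \<psi>"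
    and optimal: "\<And>T' A' \<psi>'. feasible \<gamma> T' A' \<psi>' \<Longrightarrow> T \<le> T'"
    using assms(4) unfolding time_optimal_def by auto
  then have control: "admissible_control \<gamma> T A" and final: "\<psi> T \<in> Sigma_set"
    unfolding feasible_def by auto
  interpret XY_trajectory \<gamma> T A \<psi>
    using assms(1,2) feasible unfolding feasible_def admissible_control_def by unfold_locales auto
  have "0 \<le> pi / (2 * s)" "s * (pi / (2 * s)) = pi / 2"
    using sin_gamma_pos by simp_all
  then have "T \<le> pi / (2 * s)"
    by (rule optimal[OF pure_X_feasible])
  then have sT: "s * T \<le> pi / 2"
    using sin_gamma_pos by (simp add: field_simps)
  have "0 < T"
    using control final initial cos_gamma_pos
    by (auto simp: admissible_control_def Sigma_set_iff psi0_def less_eq_real_def)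
  then obtain \<epsilon> where "0 < \<epsilon>" and \<epsilon>: "\<And>u. u \<in> {0..<\<epsilon>} \<Longrightarrow> A u = A 0"
    using control unfolding admissible_control_def by force
  have "A 0 = Xmat \<gamma>"
  proof (rule ccontr)
    assume "A 0 \<noteq> Xmat \<gamma>"
    then have "A 0 = Ymat"
      using control_values[of 0] \<open>0 < T\<close> by auto
    define \<tau> where "\<tau> = min (\<epsilon> / 2) (min (T / 2) pi)"
    have "0 < \<tau>" "\<tau> < T" "\<tau> \<le> pi"
      using \<open>0 < T\<close> \<open>0 < \<epsilon>\<close> unfolding \<tau>_def by auto
    moreover have "A t = Ymat" if "t \<in> {0..\<tau>}" for t
      using \<epsilon>[of t] that \<open>0 < \<epsilon>\<close> \<open>A 0 = Ymat\<close> unfolding \<tau>_def by auto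
    ultimately have "pi / 2 < s * T"
      using Y_arc_start_arrives_late final by blast
    with sT show False
      by simp
  qed
  then have "\<forall>t\<in>{0..<min \<epsilon> T}. A t = Xmat \<gamma>"
    using \<epsilon> by auto
  then show ?thesis
    using \<open>0 < \<epsilon>\<close> \<open>0 < T\<close> by (intro exI[of _ "min \<epsilon> T"]) auto
qed

end
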